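(* The set of all extreme points $x$ of $B_J$ for which the set of $x$-norming partitions has cardinality greater than $\aleph_0$ is uncountable.
   Context: For a real sequence $x=(x(n))_{n\in\mathbb N}$ let $\|x\|_J=\sup\bigl(\sum_{i=1}^n|\sum_{k\in I_i}x(k)|^2\bigr)^{1/2}$ over all $n$ and all families of pairwise disjoint intervals $I_1,\dots,I_n$ of $\mathbb N$ (intervals: nonempty sets of consecutive positive integers, possibly infinite). $J=\{x:\|x\|_J<\infty\}$ with closed unit ball $B_J$; for $x\in J$ and any interval $I$ the series $\sum_{k\in I}x(k)$ converges. $\mathrm{supp}(x)=\{n:x(n)\ne0\}$. A family of intervals $\mathcal I=\{I_i\}_{i\in F}$: $F=\{1,\dots,k\}$ or $F=\mathbb N$, each $I_i$ an interval, $\max I_i<\min I_{i+1}$ whenever $i+1\in F$; $\|x\|_{\mathcal I}=(\sum_{i\in F}|\sum_{k\in I_i}x(k)|^2)^{1/2}$; it is $x$-norming if $\|x\|_{\mathcal I}=\|x\|_J$. For nonempty $L\subset\mathbb N$, $\sup L=\max L$ if finite and $\infty$ otherwise. An $x$-norming partition is an $x$-norming family with $\{\min I_i,\max I_i\}\subset\mathrm{supp}(x)$ for all $i<\sup F$, and, if $F$ is finite, $\min I_i\in\mathrm{supp}(x)$ and $\sup I_i=\sup\mathrm{supp}(x)$ for $i=\sup F$. *)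

theory Defs
  imports "HOL-Analysis.Analysis" "HOL-Library.Extended_Nat"
begin

text \<open>Convention: the positive integers are modelled by nat (shifted by one);
  a real sequence is a function nat to real.\<close>

definition is_interval_nat :: "nat set \<Rightarrow> bool" where
  "is_interval_nat I \<longleftrightarrow> I \<noteq> {} \<and> (\<forall>a\<in>I. \<forall>c\<in>I. \<forall>b. a \<le> b \<and> b \<le> c \<longrightarrow> b \<in> I)"

definition isum :: "(nat \<Rightarrow> real) \<Rightarrow> nat set \<Rightarrow> real" where
  "isum x I = (\<Sum>k. if k \<in> I then x k else 0)"

definition normJ_sq :: "(nat \<Rightarrow> real) \<Rightarrow> ennreal" where
  "normJ_sq x = (SUP p \<in> {(n::nat, K::nat \<Rightarrow> nat set). (\<forall>i<n. is_interval_nat (K i)) \<and>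
        (\<forall>i<n. \<forall>j<n. i \<noteq> j \<longrightarrow> K i \<inter> K j = {})}.
      ennreal (\<Sum>i<fst p. (isum x (snd p i))\<^sup>2))"

definition inJ :: "(nat \<Rightarrow> real) \<Rightarrow> bool" where
  "inJ x \<longleftrightarrow> (\<forall>I. is_interval_nat I \<longrightarrow> summable (\<lambda>k. if k \<in> I then x k else 0))
              \<and> normJ_sq x < top"

definition normJ :: "(nat \<Rightarrow> real) \<Rightarrow> real" where
  "normJ x = sqrt (enn2real (normJ_sq x))"

definition ballJ :: "(nat \<Rightarrow> real) set" where
  "ballJ = {x. inJ x \<and> normJ x \<le> 1}"

definition extreme_pointJ :: "(nat \<Rightarrow> real) \<Rightarrow> (nat \<Rightarrow> real) set \<Rightarrow> bool" where
  "extreme_pointJ x S \<longleftrightarrow> x \<in> S \<and>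
     (\<forall>y\<in>S. \<forall>z\<in>S. \<forall>t::real. y \<noteq> z \<and> 0 < t \<and> t < 1 \<longrightarrow> x \<noteq> (\<lambda>n. (1 - t) * y n + t * z n))"

definition supp :: "(nat \<Rightarrow> real) \<Rightarrow> nat set" where
  "supp x = {n. x n \<noteq> 0}"

definition supN :: "nat set \<Rightarrow> enat" where
  "supN L = (if finite L then enat (Max L) else \<infinity>)"

text \<open>A family of intervals, indexed by F = {1..k} (k \<ge> 1) or F = {1..}, given as
  a pair (F, I); outside F the function I is {} (canonical representation).\<close>
definition interval_family :: "nat set \<Rightarrow> (nat \<Rightarrow> nat set) \<Rightarrow> bool" where
  "interval_family F I \<longleftrightarrow>
     ((\<exists>k\<ge>1. F = {1..k}) \<or> F = {1..}) \<and>
     (\<forall>i\<in>F. is_interval_nat (I i)) \<and>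
     (\<forall>i. i \<notin> F \<longrightarrow> I i = {}) \<and>
     (\<forall>i. i \<in> F \<and> i + 1 \<in> F \<longrightarrow> finite (I i) \<and> Max (I i) < Min (I (i + 1)))"

definition fam_sq :: "(nat \<Rightarrow> real) \<Rightarrow> nat set \<Rightarrow> (nat \<Rightarrow> nat set) \<Rightarrow> ennreal" where
  "fam_sq x F I = (\<Sum>i. ennreal (if i \<in> F then (isum x (I i))\<^sup>2 else 0))"

definition norming_family :: "(nat \<Rightarrow> real) \<Rightarrow> nat set \<Rightarrow> (nat \<Rightarrow> nat set) \<Rightarrow> bool" where
  "norming_family x F I \<longleftrightarrow> interval_family F I \<and> fam_sq x F I = normJ_sq x"

definition norming_partition :: "(nat \<Rightarrow> real) \<Rightarrow> nat set \<Rightarrow> (nat \<Rightarrow> nat set) \<Rightarrow> bool" where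
  "norming_partition x F I \<longleftrightarrow> norming_family x F I \<and>
     (\<forall>i\<in>F. enat i < supN F \<longrightarrow> {Min (I i), Max (I i)} \<subseteq> supp x) \<and>
     (finite F \<longrightarrow> Min (I (Max F)) \<in> supp x \<and> supN (I (Max F)) = supN (supp x))"

end

theory Submission
  imports Defs
begin

text \<open>
  The sequences used are concatenations of blocks \<open>c\<^sub>k v\<close> with \<open>v = (2, -1, 2, -2, 1, -2)\<close>
  and \<open>c\<^sub>k > 0\<close>. The pattern \<open>v\<close> has nonnegative prefix sums and total sum 0, and every run
  of consecutive entries of \<open>v\<close> has squared sum at most its sum of squares. Splitting an
  interval of \<open>\<nat>\<close> at block boundaries, where the partial sums of \<open>x\<close> vanish, shows that
  every interval \<open>I\<close> satisfies \<open>(\<Sum>k\<in>I. x k)\<^sup>2 \<le> (\<Sum>k\<in>I. (x k)\<^sup>2)\<close>, so \<open>normJ x\<close> is the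
  \<open>l\<^sup>2\<close> norm of \<open>x\<close>. As \<open>B\<^sub>J\<close> lies in the strictly convex \<open>l\<^sup>2\<close> unit ball, \<open>x\<close> is an
  extreme point of \<open>B\<^sub>J\<close> once \<open>\<Sum>k. 18 c\<^sub>k\<^sup>2 = 1\<close>. A block can be cut into four norming
  intervals in two ways, \<open>{0},{1},{2},{3,4,5}\<close> or \<open>{0,1,2},{3},{4},{5}\<close>, and choosing
  independently in each block yields uncountably many norming partitions. The coefficients
  \<open>c\<^sub>k\<^sup>2 = (1 - u) u\<^sup>k / 18\<close>, \<open>0 < u < 1\<close>, give uncountably many such \<open>x\<close>.
\<close>

lemma Max_atLeastAtMost_nat: "a \<le> b \<Longrightarrow> Max {a..b} = (b::nat)"
  by (rule Max_eqI) auto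

lemma Min_atLeastAtMost_nat: "a \<le> b \<Longrightarrow> Min {a..b} = (a::nat)"
  by (rule Min_eqI) auto

lemma uncountable_if_inj_on_image_subset:
  assumes "inj_on f A" "f ` A \<subseteq> B" "uncountable A"
  shows "uncountable B"
  using assms countable_image_inj_on countable_subset by blast

lemma uncountable_UNIV_nat_set: "uncountable (UNIV :: nat set set)"
  unfolding uncountable_def using Cantors_theorem[of "UNIV :: nat set"] by simp

lemma isum_finite: "finite A \<Longrightarrow> isum x A = (\<Sum>k\<in>A. x k)"
  unfolding isum_def by (metis sums_If_finite_set sums_unique)

lemma is_interval_nat_atLeastAtMost: "a \<le> b \<Longrightarrow> is_interval_nat {a..b}"
  unfolding is_interval_nat_def by auto

lemma is_interval_nat_cases:
  assumes "is_interval_nat I"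
  obtains a b where "I = {a..b}" | a where "I = {a..}"
proof -
  have conv: "b \<in> I" if "a \<in> I" "c \<in> I" "a \<le> b" "b \<le> c" for a b c
    using assms that unfolding is_interval_nat_def by blast
  define a where "a = (LEAST n. n \<in> I)"
  have "I \<noteq> {}" using assms unfolding is_interval_nat_def by blast
  then have a: "a \<in> I" "\<And>n. n \<in> I \<Longrightarrow> a \<le> n"
    unfolding a_def by (metis LeastI ex_in_conv, simp add: Least_le)
  show thesis
  proof (cases "finite I")
    case True
    have "Max I \<in> I"
      using True \<open>I \<noteq> {}\<close> by simp
    have "I = {a..Max I}"
    proof (intro equalityI subsetI)
      show "n \<in> {a..Max I}" if "n \<in> I" for n
        using that a(2) True by simp
      show "n \<in> I" if "n \<in> {a..Max I}" for n
        using that conv[OF a(1) \<open>Max I \<in> I\<close>, of n] by simp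
    qed
    then show thesis by (rule that(1))
  next
    case False
    have "n \<in> I" if "a \<le> n" for n
    proof -
      obtain c where "n \<le> c" "c \<in> I"
        using False by (meson infinite_nat_iff_unbounded_le)
      then show ?thesis using conv[OF a(1), of c n] that by simp
    qed
    then have "I = {a..}" using a(2) by auto
    then show thesis by (rule that(2))
  qed
qed

lemma summable_restrict_interval:
  fixes x :: "nat \<Rightarrow> real"
  assumes "summable x" "is_interval_nat I"
  shows "summable (\<lambda>k. if k \<in> I then x k else 0)"
  using assms(2)
proof (cases rule: is_interval_nat_cases)
  case (1 a b)
  then have "finite I" by simp
  then show ?thesis by (rule sums_summable[OF sums_If_finite_set])
next
  case (2 a)
  have "eventually (\<lambda>k. (if k \<in> I then x k else 0) = x k) sequentially"
    by (rule eventually_mono[OF eventually_ge_at_top[of a]]) (simp add: 2)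
  from summable_cong[OF this] show ?thesis using assms(1) by simp
qed

lemma isum_atLeast_LIMSEQ:
  assumes "summable x"
  shows "(\<lambda>b. \<Sum>k\<in>{a..<b}. x k) \<longlonglongrightarrow> isum x {a..}"
proof -
  have "{a..<b} = {..<b} \<inter> {a..}" for b by auto
  then have "(\<Sum>k<b. if k \<in> {a..} then x k else 0) = (\<Sum>k\<in>{a..<b}. x k)" for b
    by (simp add: sum.inter_restrict)
  then show ?thesis
    using summable_LIMSEQ[OF summable_restrict_interval[OF assms, of "{a..}"]]
    by (simp add: isum_def is_interval_nat_def)
qed

lemma sum_squares_le_normJ_sq: "ennreal (\<Sum>i<N. (x i)\<^sup>2) \<le> normJ_sq x"
  unfolding normJ_sq_def
  by (rule SUP_upper2[of "(N, \<lambda>i. {i})"]) (auto simp: is_interval_nat_def isum_finite)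

lemma sum_squares_le_1_if_in_ballJ:
  assumes "y \<in> ballJ"
  shows "summable (\<lambda>i. (y i)\<^sup>2)" "(\<Sum>i. (y i)\<^sup>2) \<le> 1"
proof -
  obtain r where r: "normJ_sq y = ennreal r" "0 \<le> r"
    using assms less_top_ennreal unfolding ballJ_def inJ_def by blast
  then have "r \<le> 1" using assms by (simp add: ballJ_def normJ_def)
  then have partial: "(\<Sum>i<N. (y i)\<^sup>2) \<le> 1" for N
    using sum_squares_le_normJ_sq[where x=y and N=N] r by (simp add: ennreal_le_iff)
  show summable: "summable (\<lambda>i. (y i)\<^sup>2)"
    by (rule summableI_nonneg_bounded[OF _ partial]) simp
  show "(\<Sum>i. (y i)\<^sup>2) \<le> 1" by (rule suminf_le_const[OF summable partial])
qed

lemma extreme_pointJ_if_sum_squares_1: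
  assumes x: "x \<in> ballJ" and sq: "(\<lambda>n. (x n)\<^sup>2) sums 1"
  shows "extreme_pointJ x ballJ"
  unfolding extreme_pointJ_def
proof (intro conjI x ballI allI impI notI)
  fix y z and t :: real
  assume y: "y \<in> ballJ" and z: "z \<in> ballJ" and t: "y \<noteq> z \<and> 0 < t \<and> t < 1"
    and x_eq: "x = (\<lambda>n. (1 - t) * y n + t * z n)"
  define d where "d n = t * (1 - t) * (y n - z n)\<^sup>2" for n
  define s where "s = (1 - t) * (\<Sum>n. (y n)\<^sup>2) + t * (\<Sum>n. (z n)\<^sup>2) - 1"
  have "d = (\<lambda>n. (1 - t) * (y n)\<^sup>2 + t * (z n)\<^sup>2 - (x n)\<^sup>2)"
    unfolding d_def x_eq by (simp add: fun_eq_iff power2_eq_square algebra_simps)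
  then have d_sums: "d sums s"
    unfolding s_def
    by (simp only:) (intro sums_diff sums_add sums_mult summable_sums sq
        sum_squares_le_1_if_in_ballJ(1) y z)
  have d_nonneg: "0 \<le> d n" for n
    unfolding d_def using t by simp
  have "(1 - t) * (\<Sum>n. (y n)\<^sup>2) \<le> 1 - t" "t * (\<Sum>n. (z n)\<^sup>2) \<le> t"
    using t sum_squares_le_1_if_in_ballJ(2)[OF y] sum_squares_le_1_if_in_ballJ(2)[OF z]
    by (simp_all add: mult_left_le)
  then have "s \<le> 0" unfolding s_def by linarith
  moreover have "0 \<le> s"
    by (rule sums_le[OF d_nonneg sums_zero d_sums])
  ultimately have "suminf d = 0"
    using sums_unique[OF d_sums] by simp
  then have "d n = 0" for n
    using suminf_eq_zero_iff[OF sums_summable[OF d_sums] d_nonneg] by simp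
  then have "y n = z n" for n
    using t unfolding d_def by simp
  then show False using t by auto
qed

lemma sum_isum_le_suminf_if_disjoint:
  fixes f :: "nat \<Rightarrow> real" and K :: "nat \<Rightarrow> nat set" and n :: nat
  assumes nonneg: "\<And>k. 0 \<le> f k" and f: "summable f" and disj: "disjoint_family_on K {..<n}"
  shows "(\<Sum>i<n. isum f (K i)) \<le> suminf f"
proof -
  have restrict: "(\<lambda>k. if k \<in> K i then f k else 0) = (\<lambda>k. f k * indicator (K i) k)" for i
    by (auto simp: indicator_def)
  have summable: "summable (\<lambda>k. f k * indicator A k)" for A
    by (rule summable_comparison_test'[OF f]) (auto simp: indicator_def nonneg)
  have "(\<Sum>i<n. isum f (K i)) = (\<Sum>k. \<Sum>i<n. f k * indicator (K i) k)"
    unfolding isum_def restrict by (rule suminf_sum[symmetric]) (rule summable)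
  also have "\<dots> = (\<Sum>k. f k * indicator (\<Union>i<n. K i) k)"
    by (simp add: sum_distrib_left[symmetric] indicator_UN_disjoint[OF _ disj])
  also have "\<dots> \<le> suminf f"
    by (rule suminf_le[OF _ summable f]) (simp add: indicator_def nonneg)
  finally show ?thesis .
qed

context
  fixes x :: "nat \<Rightarrow> real"
  assumes sq: "summable (\<lambda>k. (x k)\<^sup>2)"
    and interval_ineq: "\<And>a b. (\<Sum>k\<in>{a..<b}. x k)\<^sup>2 \<le> (\<Sum>k\<in>{a..<b}. (x k)\<^sup>2)"
begin

lemma summable_if_interval_ineq: "summable x"
  unfolding summable_Cauchy
proof (intro allI impI)
  fix e :: real assume "0 < e"
  then obtain N where N: "\<And>m n. m \<ge> N \<Longrightarrow> norm (\<Sum>k\<in>{m..<n}. (x k)\<^sup>2) < e\<^sup>2"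
    using sq unfolding summable_Cauchy by (metis zero_less_power)
  have "norm (\<Sum>k\<in>{m..<n}. x k) < e" if "m \<ge> N" for m n
  proof -
    have "(norm (\<Sum>k\<in>{m..<n}. x k))\<^sup>2 < e\<^sup>2"
      using interval_ineq[of m n] N[OF that, of n] by simp
    then show ?thesis using \<open>0 < e\<close> power2_less_imp_less[of "norm (\<Sum>k\<in>{m..<n}. x k)" e] by simp
  qed
  then show "\<exists>N. \<forall>m\<ge>N. \<forall>n. norm (\<Sum>k\<in>{m..<n}. x k) < e" by blast
qed

lemma isum_sq_le_if_interval_ineq:
  assumes "is_interval_nat I"
  shows "(isum x I)\<^sup>2 \<le> isum (\<lambda>k. (x k)\<^sup>2) I"
  using assms
proof (cases rule: is_interval_nat_cases)
  case (1 a b)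
  then show ?thesis
    using interval_ineq[of a "Suc b"] by (simp add: isum_finite atLeastLessThanSuc_atLeastAtMost)
next
  case (2 a)
  have "(\<lambda>b. (\<Sum>k\<in>{a..<b}. x k)\<^sup>2) \<longlonglongrightarrow> (isum x {a..})\<^sup>2"
    by (intro tendsto_power isum_atLeast_LIMSEQ summable_if_interval_ineq)
  then have "(isum x {a..})\<^sup>2 \<le> isum (\<lambda>k. (x k)\<^sup>2) {a..}"
    by (rule LIMSEQ_le[OF _ isum_atLeast_LIMSEQ[OF sq]]) (use interval_ineq in blast)
  then show ?thesis by (simp add: 2)
qed

lemma normJ_sq_eq_sum_squares_if_interval_ineq: "normJ_sq x = ennreal (\<Sum>k. (x k)\<^sup>2)"
proof (rule antisym)
  show "normJ_sq x \<le> ennreal (\<Sum>k. (x k)\<^sup>2)"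
    unfolding normJ_sq_def
  proof (rule SUP_least, clarsimp)
    fix n :: nat and K :: "nat \<Rightarrow> nat set" assume intervals: "\<forall>i<n. is_interval_nat (K i)"
      and disj: "\<forall>i<n. \<forall>j<n. i \<noteq> j \<longrightarrow> K i \<inter> K j = {}"
    have "(\<Sum>i<n. (isum x (K i))\<^sup>2) \<le> (\<Sum>i<n. isum (\<lambda>k. (x k)\<^sup>2) (K i))"
      using intervals by (intro sum_mono isum_sq_le_if_interval_ineq) simp
    also have "\<dots> \<le> (\<Sum>k. (x k)\<^sup>2)"
      using disj by (intro sum_isum_le_suminf_if_disjoint sq) (auto simp: disjoint_family_on_def)
    finally show "ennreal (\<Sum>i<n. (isum x (K i))\<^sup>2) \<le> ennreal (\<Sum>k. (x k)\<^sup>2)"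
      by (rule ennreal_leI)
  qed
  show "ennreal (\<Sum>k. (x k)\<^sup>2) \<le> normJ_sq x"
    by (rule LIMSEQ_le_const2[OF tendsto_ennrealI[OF summable_LIMSEQ[OF sq]]])
      (use sum_squares_le_normJ_sq in blast)
qed

lemma inJ_if_interval_ineq: "inJ x"
  unfolding inJ_def normJ_sq_eq_sum_squares_if_interval_ineq
  by (simp add: summable_restrict_interval summable_if_interval_ineq)

end

lemma sums_if_nonneg_and_grouped_sums:
  fixes f :: "nat \<Rightarrow> real"
  assumes nonneg: "\<And>n. 0 \<le> f n" and "0 < d"
    and grouped: "(\<lambda>m. \<Sum>n<m * d. f n) \<longlonglongrightarrow> L"
  shows "f sums L"
proof -
  have mono: "(\<Sum>n<N. f n) \<le> (\<Sum>n<N'. f n)" if "N \<le> N'" for N N'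
    using that nonneg by (intro sum_mono2) auto
  have "incseq (\<lambda>m. \<Sum>n<m * d. f n)"
    using mono by (simp add: incseq_def)
  then have "(\<Sum>n<m * d. f n) \<le> L" for m
    using grouped by (rule incseq_le)
  moreover have "(\<Sum>n<N. f n) \<le> (\<Sum>n<N * d. f n)" for N
    using \<open>0 < d\<close> by (intro mono) simp
  ultimately have "(\<Sum>n<N. f n) \<le> L" for N
    by (meson order_trans)
  then have summable: "summable f"
    by (rule summableI_nonneg_bounded[OF nonneg])
  have "strict_mono (\<lambda>m. m * d)"
    using \<open>0 < d\<close> by (simp add: strict_mono_def)
  with summable_LIMSEQ[OF summable] have "(\<lambda>m. \<Sum>n<m * d. f n) \<longlonglongrightarrow> suminf f"
    by (rule LIMSEQ_subseq_LIMSEQ[unfolded comp_def])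
  with grouped have "L = suminf f"
    by (rule LIMSEQ_unique)
  then show ?thesis
    using summable by (simp add: summable_sums)
qed

lemma interval_ineq_if_block_interval_ineq:
  fixes x :: "nat \<Rightarrow> real"
  assumes "0 < d"
    and partial_nonneg: "\<And>N. 0 \<le> (\<Sum>n<N. x n)"
    and partial_boundary: "\<And>k. (\<Sum>n<k * d. x n) = 0"
    and within_block: "\<And>k a b. k * d \<le> a \<Longrightarrow> b \<le> k * d + d \<Longrightarrow>
      (\<Sum>n\<in>{a..<b}. x n)\<^sup>2 \<le> (\<Sum>n\<in>{a..<b}. (x n)\<^sup>2)"
  shows "(\<Sum>n\<in>{a..<b}. x n)\<^sup>2 \<le> (\<Sum>n\<in>{a..<b}. (x n)\<^sup>2)"
proof -
  define k m where "k = a div d" and "m = b div d"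
  have "a = k * d + a mod d" "b = m * d + b mod d" "a mod d < d" "b mod d < d"
    using \<open>0 < d\<close> unfolding k_def m_def by simp_all
  then have a: "k * d \<le> a" "a \<le> k * d + d" and b: "m * d \<le> b" "b \<le> m * d + d"
    by linarith+
  show ?thesis
  proof (cases "b \<le> k * d + d")
    case True
    then show ?thesis by (rule within_block[OF a(1)])
  next
    case False
    \<comment> \<open>\<open>S a\<close> and \<open>S b\<close> are the sums over the two end pieces, and
      \<open>(S b - S a)\<^sup>2 \<le> (S a)\<^sup>2 + (S b)\<^sup>2\<close> as both are nonnegative.\<close>
    then have "k * d < m * d" using b by linarith
    then have "Suc k * d \<le> m * d" by (intro mult_le_mono1) (simp add: mult_less_cancel2)
    then have bounds: "a \<le> k * d + d" "k * d + d \<le> m * d" "m * d \<le> b" using a b by simp_all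
    define S where "S N = (\<Sum>n<N. x n)" for N
    have S_diff: "(\<Sum>n\<in>{p..<q}. x n) = S q - S p" if "p \<le> q" for p q
      using sum_diff_nat_ivl[of 0 p q x] that by (simp add: S_def atLeast0LessThan)
    have "S (k * d + d) = 0" "S (m * d) = 0"
      using partial_boundary[of "Suc k"] partial_boundary[of m] by (simp_all add: S_def add.commute)
    then have "(S a)\<^sup>2 = (\<Sum>n\<in>{a..<k * d + d}. x n)\<^sup>2" "(S b)\<^sup>2 = (\<Sum>n\<in>{m * d..<b}. x n)\<^sup>2"
      using bounds by (simp_all add: S_diff power2_commute)
    then have "(S a)\<^sup>2 + (S b)\<^sup>2 \<le> (\<Sum>n\<in>{a..<k * d + d}. (x n)\<^sup>2) + (\<Sum>n\<in>{m * d..<b}. (x n)\<^sup>2)"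
      using a b within_block[of k a "k * d + d"] within_block[of m "m * d" b] by (intro add_mono) simp_all
    also have "\<dots> \<le> (\<Sum>n\<in>{a..<b}. (x n)\<^sup>2)"
    proof -
      have "{a..<k * d + d} \<union> {m * d..<b} \<subseteq> {a..<b}" "{a..<k * d + d} \<inter> {m * d..<b} = {}"
        using bounds by auto
      then show ?thesis
        by (simp flip: sum.union_disjoint) (intro sum_mono2, simp_all)
    qed
    finally have "(S a)\<^sup>2 + (S b)\<^sup>2 \<le> (\<Sum>n\<in>{a..<b}. (x n)\<^sup>2)" .
    moreover have "(S b - S a)\<^sup>2 \<le> (S a)\<^sup>2 + (S b)\<^sup>2"
      using partial_nonneg[of a] partial_nonneg[of b] by (simp add: S_def power2_diff)
    moreover have "(\<Sum>n\<in>{a..<b}. x n) = S b - S a"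
      using bounds by (simp add: S_diff)
    ultimately show ?thesis by simp
  qed
qed

lemma sum_periodic_block:
  fixes g :: "nat \<Rightarrow> nat \<Rightarrow> 'a::comm_monoid_add"
  assumes "j \<le> d"
  shows "(\<Sum>n\<in>{k * d + i..<k * d + j}. g (n div d) (n mod d)) = (\<Sum>l\<in>{i..<j}. g k l)"
proof -
  have "(\<Sum>n\<in>{k * d + i..<k * d + j}. g (n div d) (n mod d))
      = (\<Sum>l\<in>{i..<j}. g ((l + k * d) div d) ((l + k * d) mod d))"
    using sum.shift_bounds_nat_ivl[of "\<lambda>n. g (n div d) (n mod d)" i "k * d" j]
    by (simp add: add.commute)
  also have "\<dots> = (\<Sum>l\<in>{i..<j}. g k l)"
    using assms by (intro sum.cong) auto
  finally show ?thesis .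
qed

definition pattern :: "nat \<Rightarrow> real" where
  "pattern j = [2, -1, 2, -2, 1, -2] ! j"

lemma pattern_interval_ineq:
  assumes "j \<le> 6"
  shows "(\<Sum>l\<in>{i..<j}. pattern l)\<^sup>2 \<le> (\<Sum>l\<in>{i..<j}. (pattern l)\<^sup>2)"
proof (cases "i \<le> j")
  case True
  have "j = 0 \<or> j = 1 \<or> j = 2 \<or> j = 3 \<or> j = 4 \<or> j = 5 \<or> j = 6"
    "i = 0 \<or> i = 1 \<or> i = 2 \<or> i = 3 \<or> i = 4 \<or> i = 5 \<or> i = 6"
    using assms True by auto
  then show ?thesis
    using True by (elim disjE) (simp_all add: pattern_def eval_nat_numeral atLeastLessThanSuc)
qed simp

lemma pattern_prefix_sum_nonneg:
  assumes "j \<le> 6"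
  shows "0 \<le> (\<Sum>l<j. pattern l)"
proof -
  have "j = 0 \<or> j = 1 \<or> j = 2 \<or> j = 3 \<or> j = 4 \<or> j = 5 \<or> j = 6"
    using assms by auto
  then show ?thesis
    by (elim disjE) (simp_all add: pattern_def eval_nat_numeral)
qed

lemma pattern_sum: "(\<Sum>l<6. pattern l) = 0"
  by (simp add: pattern_def eval_nat_numeral)

lemma pattern_sq_sum: "(\<Sum>l<6. (pattern l)\<^sup>2) = 18"
  by (simp add: pattern_def eval_nat_numeral)

lemma pattern_nonzero: "j < 6 \<Longrightarrow> pattern j \<noteq> 0"
  by (auto simp: pattern_def less_Suc_eq eval_nat_numeral)

definition block_coeff :: "real \<Rightarrow> nat \<Rightarrow> real" where
  "block_coeff u k = sqrt ((1 - u) * u ^ k / 18)"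

definition block_seq :: "real \<Rightarrow> nat \<Rightarrow> real" where
  "block_seq u n = block_coeff u (n div 6) * pattern (n mod 6)"

text \<open>The two ways of cutting a block \<open>{0..5}\<close> into four intervals (given by their endpoints)
  on each of which the pattern has squared sum equal to its sum of squares.\<close>

definition block_cuts :: "bool \<Rightarrow> (nat \<times> nat) list" where
  "block_cuts b = (if b then [(0, 0), (1, 1), (2, 2), (3, 5)] else [(0, 2), (3, 3), (4, 4), (5, 5)])"

definition split_family :: "nat set \<Rightarrow> nat \<Rightarrow> nat set" where
  "split_family S i = (if i = 0 then {} else
     (let k = (i - 1) div 4; c = block_cuts (k \<in> S) ! ((i - 1) mod 4)
      in {k * 6 + fst c..k * 6 + snd c}))"

lemma block_cuts_bounds:
  "l < 4 \<Longrightarrow> fst (block_cuts b ! l) \<le> snd (block_cuts b ! l) \<and> snd (block_cuts b ! l) < 6"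
  by (auto simp: block_cuts_def less_Suc_eq eval_nat_numeral)

lemma block_cuts_adjacent: "l < 3 \<Longrightarrow> snd (block_cuts b ! l) < fst (block_cuts b ! Suc l)"
  by (auto simp: block_cuts_def less_Suc_eq eval_nat_numeral)

lemma block_cuts_energy:
  "(\<Sum>l<4. (\<Sum>n\<in>{fst (block_cuts b ! l)..snd (block_cuts b ! l)}. pattern n)\<^sup>2) = 18"
  by (cases b) (simp_all add: block_cuts_def pattern_def eval_nat_numeral atLeastAtMostSuc_conv)

lemma split_family_Suc:
  assumes "l < 4"
  shows "split_family S (Suc (k * 4 + l))
    = {k * 6 + fst (block_cuts (k \<in> S) ! l)..k * 6 + snd (block_cuts (k \<in> S) ! l)}"
  using assms by (simp add: split_family_def Let_def)

lemma is_interval_split_family: "is_interval_nat (split_family S (Suc m))"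
  using block_cuts_bounds[of "m mod 4" "m div 4 \<in> S"]
  by (simp add: split_family_def Let_def is_interval_nat_atLeastAtMost)

lemma split_family_ordered: "Max (split_family S (Suc m)) < Min (split_family S (Suc (Suc m)))"
proof -
  define k l where "k = m div 4" and "l = m mod 4"
  have l: "l < 4" and m: "m = k * 4 + l" unfolding k_def l_def by simp_all
  have current: "split_family S (Suc m)
      = {k * 6 + fst (block_cuts (k \<in> S) ! l)..k * 6 + snd (block_cuts (k \<in> S) ! l)}"
    unfolding m by (rule split_family_Suc[OF l])
  show ?thesis
  proof (cases "l = 3")
    case True
    then have "Suc (Suc m) = Suc (Suc k * 4 + 0)" using m by simp
    then have "split_family S (Suc (Suc m))
        = {Suc k * 6 + fst (block_cuts (Suc k \<in> S) ! 0)..Suc k * 6 + snd (block_cuts (Suc k \<in> S) ! 0)}"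
      by (simp only: split_family_Suc)
    then show ?thesis
      using current block_cuts_bounds[OF l, of "k \<in> S"] block_cuts_bounds[of 0 "Suc k \<in> S"]
      by (simp add: Max_atLeastAtMost_nat Min_atLeastAtMost_nat)
  next
    case False
    then have "Suc (Suc m) = Suc (k * 4 + Suc l)" and "l < 3" "Suc l < 4"
      using m l by simp_all
    then have "split_family S (Suc (Suc m))
        = {k * 6 + fst (block_cuts (k \<in> S) ! Suc l)..k * 6 + snd (block_cuts (k \<in> S) ! Suc l)}"
      by (simp only: split_family_Suc)
    then show ?thesis
      using current block_cuts_bounds[OF l] block_cuts_bounds[OF \<open>Suc l < 4\<close>]
        block_cuts_adjacent[OF \<open>l < 3\<close>]
      by (simp add: Max_atLeastAtMost_nat Min_atLeastAtMost_nat)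
  qed
qed

lemma interval_family_split_family: "interval_family {1..} (split_family S)"
  unfolding interval_family_def
proof (intro conjI allI ballI impI)
  show "is_interval_nat (split_family S i)" if "i \<in> {1..}" for i
    using is_interval_split_family[of S "i - 1"] that by simp
  show "Max (split_family S i) < Min (split_family S (i + 1))" if "i \<in> {1..} \<and> i + 1 \<in> {1..}" for i
    using split_family_ordered[of S "i - 1"] that by simp
qed (auto simp: split_family_def Let_def)

lemma inj_split_family: "inj split_family"
proof (rule injI)
  fix S T assume eq: "split_family S = split_family T"
  show "S = T"
  proof (rule set_eqI)
    fix k
    have "k * 6 + 2 \<in> split_family R (Suc (k * 4)) \<longleftrightarrow> k \<notin> R" for R
      by (simp add: split_family_def block_cuts_def)
    then show "k \<in> S \<longleftrightarrow> k \<in> T"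
      using eq by metis
  qed
qed

context
  fixes u :: real
  assumes u: "0 < u" "u < 1"
begin

lemma block_coeff_pos: "0 < block_coeff u k"
  using u by (simp add: block_coeff_def)

lemma block_coeff_sq_sums: "(\<lambda>k. 18 * (block_coeff u k)\<^sup>2) sums 1"
proof -
  have "(\<lambda>k. (1 - u) * u ^ k) sums ((1 - u) * (1 / (1 - u)))"
    using u by (intro sums_mult geometric_sums) simp
  moreover have "18 * (block_coeff u k)\<^sup>2 = (1 - u) * u ^ k" for k
    using u by (simp add: block_coeff_def)
  ultimately show ?thesis using u by simp
qed

lemma block_seq_block_sum:
  "j \<le> 6 \<Longrightarrow> (\<Sum>n\<in>{k * 6 + i..<k * 6 + j}. block_seq u n) = block_coeff u k * (\<Sum>l\<in>{i..<j}. pattern l)"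
  using sum_periodic_block[of j 6 "\<lambda>k l. block_coeff u k * pattern l" k i]
  by (simp add: block_seq_def sum_distrib_left)

lemma block_seq_block_sq_sum:
  "j \<le> 6 \<Longrightarrow> (\<Sum>n\<in>{k * 6 + i..<k * 6 + j}. (block_seq u n)\<^sup>2)
     = (block_coeff u k)\<^sup>2 * (\<Sum>l\<in>{i..<j}. (pattern l)\<^sup>2)"
  using sum_periodic_block[of j 6 "\<lambda>k l. (block_coeff u k * pattern l)\<^sup>2" k i]
  by (simp add: block_seq_def sum_distrib_left power_mult_distrib)

lemma block_seq_partial_sum:
  assumes "j \<le> 6"
  shows "(\<Sum>n<k * 6 + j. block_seq u n) = block_coeff u k * (\<Sum>l<j. pattern l)"
proof -
  have "(\<Sum>n<k * 6. block_seq u n) = 0"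
    using sum.nat_group[of "block_seq u" 6 k] block_seq_block_sum[of 6 _ 0]
    by (simp add: pattern_sum atLeast0LessThan)
  moreover have "(\<Sum>n<k * 6 + j. block_seq u n)
      = (\<Sum>n<k * 6. block_seq u n) + (\<Sum>n\<in>{k * 6..<k * 6 + j}. block_seq u n)"
    using sum.atLeastLessThan_concat[of 0 "k * 6" "k * 6 + j" "block_seq u"]
    by (simp add: atLeast0LessThan)
  ultimately show ?thesis
    using block_seq_block_sum[OF assms, of k 0] by (simp add: atLeast0LessThan)
qed

lemma block_seq_partial_sum_nonneg: "0 \<le> (\<Sum>n<N. block_seq u n)"
proof -
  have "(\<Sum>n<N. block_seq u n) = block_coeff u (N div 6) * (\<Sum>l<N mod 6. pattern l)"
    using block_seq_partial_sum[of "N mod 6" "N div 6"] by simp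
  then show ?thesis
    using block_coeff_pos[of "N div 6"] pattern_prefix_sum_nonneg[of "N mod 6"] by simp
qed

lemma block_seq_interval_ineq_within_block:
  assumes "k * 6 \<le> a" "b \<le> k * 6 + 6"
  shows "(\<Sum>n\<in>{a..<b}. block_seq u n)\<^sup>2 \<le> (\<Sum>n\<in>{a..<b}. (block_seq u n)\<^sup>2)"
proof -
  define i j where "i = a - k * 6" and "j = b - k * 6"
  have ab: "a = k * 6 + i" "j \<le> 6" "b = k * 6 + j \<or> b < a"
    using assms unfolding i_def j_def by auto
  show ?thesis
  proof (cases "b < a")
    case False
    then have b: "b = k * 6 + j" using ab by simp
    have "(\<Sum>n\<in>{a..<b}. block_seq u n)\<^sup>2 = (block_coeff u k)\<^sup>2 * (\<Sum>l\<in>{i..<j}. pattern l)\<^sup>2"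
      unfolding ab(1) b block_seq_block_sum[OF ab(2)] by (simp add: power_mult_distrib)
    also have "\<dots> \<le> (block_coeff u k)\<^sup>2 * (\<Sum>l\<in>{i..<j}. (pattern l)\<^sup>2)"
      using pattern_interval_ineq[OF ab(2)] by (intro mult_left_mono) simp_all
    also have "\<dots> = (\<Sum>n\<in>{a..<b}. (block_seq u n)\<^sup>2)"
      unfolding ab(1) b block_seq_block_sq_sum[OF ab(2)] ..
    finally show ?thesis .
  qed simp
qed

lemma block_seq_interval_ineq:
  "(\<Sum>n\<in>{a..<b}. block_seq u n)\<^sup>2 \<le> (\<Sum>n\<in>{a..<b}. (block_seq u n)\<^sup>2)"
proof (rule interval_ineq_if_block_interval_ineq[of 6])
  show "(\<Sum>n<k * 6. block_seq u n) = 0" for k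
    using block_seq_partial_sum[of 0 k] by simp
qed (simp_all add: block_seq_partial_sum_nonneg block_seq_interval_ineq_within_block)

lemma block_seq_sq_sums: "(\<lambda>n. (block_seq u n)\<^sup>2) sums 1"
proof (rule sums_if_nonneg_and_grouped_sums)
  have "(\<Sum>n<K * 6. (block_seq u n)\<^sup>2) = (\<Sum>k<K. (block_coeff u k)\<^sup>2 * 18)" for K
    using sum.nat_group[of "\<lambda>n. (block_seq u n)\<^sup>2" 6 K] block_seq_block_sq_sum[of 6 _ 0]
    by (simp add: pattern_sq_sum atLeast0LessThan)
  then show "(\<lambda>K. \<Sum>n<K * 6. (block_seq u n)\<^sup>2) \<longlonglongrightarrow> 1"
    using block_coeff_sq_sums by (simp add: sums_def mult.commute)
qed simp_all

lemma normJ_sq_block_seq: "normJ_sq (block_seq u) = 1"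
  using normJ_sq_eq_sum_squares_if_interval_ineq[OF sums_summable[OF block_seq_sq_sums] block_seq_interval_ineq]
  by (simp add: sums_unique[OF block_seq_sq_sums, symmetric])

lemma block_seq_in_ballJ: "block_seq u \<in> ballJ"
  using inJ_if_interval_ineq[OF sums_summable[OF block_seq_sq_sums] block_seq_interval_ineq]
  by (simp add: ballJ_def normJ_def normJ_sq_block_seq)

lemma extreme_pointJ_block_seq: "extreme_pointJ (block_seq u) ballJ"
  by (rule extreme_pointJ_if_sum_squares_1[OF block_seq_in_ballJ block_seq_sq_sums])

lemma supp_block_seq: "supp (block_seq u) = UNIV"
proof -
  have "block_seq u n \<noteq> 0" for n
    using block_coeff_pos[of "n div 6"] pattern_nonzero[of "n mod 6"] by (simp add: block_seq_def)
  then show ?thesis by (auto simp: supp_def)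
qed

lemma block_seq_isum_block:
  assumes "b < 6"
  shows "isum (block_seq u) {k * 6 + a..k * 6 + b} = block_coeff u k * (\<Sum>l\<in>{a..b}. pattern l)"
proof -
  have ivl: "{k * 6 + a..k * 6 + b} = {k * 6 + a..<k * 6 + Suc b}" "{a..b} = {a..<Suc b}"
    by auto
  have "isum (block_seq u) {k * 6 + a..k * 6 + b} = (\<Sum>n\<in>{k * 6 + a..<k * 6 + Suc b}. block_seq u n)"
    unfolding ivl(1) by (rule isum_finite) simp
  also have "\<dots> = block_coeff u k * (\<Sum>l\<in>{a..b}. pattern l)"
    unfolding ivl(2) using assms by (intro block_seq_block_sum) simp
  finally show ?thesis .
qed

lemma norming_partition_split_family: "norming_partition (block_seq u) {1..} (split_family S)"
proof -
  define h where "h i = (if i \<in> {1..} then (isum (block_seq u) (split_family S i))\<^sup>2 else 0)" for i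
  have piece: "h (Suc (k * 4 + l))
      = (block_coeff u k)\<^sup>2 * (\<Sum>n\<in>{fst (block_cuts (k \<in> S) ! l)..snd (block_cuts (k \<in> S) ! l)}. pattern n)\<^sup>2"
    if "l < 4" for k l
    using block_cuts_bounds[OF that, of "k \<in> S"]
    by (simp add: h_def split_family_Suc[OF that] block_seq_isum_block power_mult_distrib)
  have "(\<Sum>m<K * 4. h (Suc m)) = (\<Sum>k<K. (block_coeff u k)\<^sup>2 * 18)" for K
  proof -
    have "(\<Sum>m\<in>{k * 4..<k * 4 + 4}. h (Suc m)) = (block_coeff u k)\<^sup>2 * 18" for k
      using sum_periodic_block[of 4 4 "\<lambda>k l. h (Suc (k * 4 + l))" k 0] piece
      by (simp add: atLeast0LessThan block_cuts_energy flip: sum_distrib_left)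
    then show ?thesis
      using sum.nat_group[of "\<lambda>m. h (Suc m)" 4 K] by simp
  qed
  then have "(\<lambda>m. h (Suc m)) sums 1"
    using block_coeff_sq_sums
    by (intro sums_if_nonneg_and_grouped_sums[of _ 4]) (simp_all add: h_def sums_def mult.commute)
  then have "h sums (1 + h 0)"
    by (simp only: sums_Suc_iff)
  then have "h sums 1"
    by (simp add: h_def)
  have "fam_sq (block_seq u) {1..} (split_family S) = (\<Sum>i. ennreal (h i))"
    by (simp add: fam_sq_def h_def)
  also have "\<dots> = ennreal (suminf h)"
    by (rule suminf_ennreal2[OF _ sums_summable[OF \<open>h sums 1\<close>]]) (simp add: h_def)
  finally have "fam_sq (block_seq u) {1..} (split_family S) = 1"
    using \<open>h sums 1\<close> by (simp add: sums_unique[symmetric])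
  then show ?thesis
    using interval_family_split_family normJ_sq_block_seq supp_block_seq
    by (simp add: norming_partition_def norming_family_def infinite_Ici)
qed

lemma uncountable_norming_partitions_block_seq:
  "uncountable {(F, I). norming_partition (block_seq u) F I}"
proof (rule uncountable_if_inj_on_image_subset[OF _ _ uncountable_UNIV_nat_set])
  show "inj (\<lambda>S. ({1::nat..}, split_family S))"
    using inj_split_family by (simp add: inj_def)
  show "range (\<lambda>S. ({1..}, split_family S)) \<subseteq> {(F, I). norming_partition (block_seq u) F I}"
    using norming_partition_split_family by auto
qed

end

lemma inj_on_block_seq: "inj_on block_seq {0<..<1}"
proof (rule inj_onI)
  fix u v :: real assume "u \<in> {0<..<1}" "v \<in> {0<..<1}" and eq: "block_seq u = block_seq v"
  have "sqrt ((1 - u) / 18) = sqrt ((1 - v) / 18)"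
    using fun_cong[OF eq, of 0] by (simp add: block_seq_def block_coeff_def pattern_def)
  then show "u = v" by simp
qed

theorem proposition6p7:
  shows "uncountable {x. extreme_pointJ x ballJ \<and>
                        uncountable {(F, I). norming_partition x F I}}"
proof (rule uncountable_if_inj_on_image_subset[OF inj_on_block_seq])
  show "block_seq ` {0<..<1} \<subseteq> {x. extreme_pointJ x ballJ \<and> uncountable {(F, I). norming_partition x F I}}"
    using extreme_pointJ_block_seq uncountable_norming_partitions_block_seq by auto
  show "uncountable {0<..<1::real}"
    by (simp add: uncountable_open_interval)
qed

end
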